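(* Let $\mathcal{H}$ be a complex Hilbert space and $B,C\in\mathcal{B}(\mathcal{H})$. If $$w^2\left(\begin{bmatrix}0 & B\\ C & 0\end{bmatrix}\right)=\frac14\max\left\{\big\||B|^2+|C^*|^2\big\|,\ \big\||B^*|^2+|C|^2\big\|\right\},$$ then $\|B+C^*\|=\|B-C^*\|$.
   Context: $\mathcal{B}(\mathcal{H})$ is the algebra of bounded linear operators on $\mathcal{H}$ with operator norm $\|\cdot\|$. For $A\in\mathcal{B}(\mathcal{H})$, $A^*$ is the adjoint, $|A|=(A^*A)^{1/2}$, $|A^*|=(AA^* )^{1/2}$, and $w(A)=\sup_{\|x\|=1}|\langle Ax,x\rangle|$ is the numerical radius. The operator matrix $\begin{bmatrix}A&B\\C&D\end{bmatrix}$ acts on $\mathcal{H}\oplus\mathcal{H}$ by $(x_1,x_2)\mapsto(Ax_1+Bx_2,\,Cx_1+Dx_2)$; $0$ denotes the zero operator. *)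

theory Defs
  imports "HOL-Analysis.Analysis"
begin

class complex_inner_space = ab_group_add +
  fixes scaleC :: "complex \<Rightarrow> 'a \<Rightarrow> 'a"
    and cinner :: "'a \<Rightarrow> 'a \<Rightarrow> complex"
  assumes scaleC_add_right: "scaleC a (x + y) = scaleC a x + scaleC a y"
    and scaleC_add_left: "scaleC (a + b) x = scaleC a x + scaleC b x"
    and scaleC_scaleC: "scaleC a (scaleC b x) = scaleC (a * b) x"
    and scaleC_one: "scaleC 1 x = x"
    and cinner_add_left: "cinner (x + y) z = cinner x z + cinner y z"
    and cinner_scaleC_left: "cinner (scaleC a x) y = a * cinner x y"
    and cinner_commute: "cinner y x = cnj (cinner x y)"
    and cinner_ge_zero: "0 \<le> Re (cinner x x)"
    and cinner_eq_zero_iff: "cinner x x = 0 \<longleftrightarrow> x = 0"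

definition cnorm :: "'a::complex_inner_space \<Rightarrow> real" where
  "cnorm x = sqrt (Re (cinner x x))"

class chilbert_space = complex_inner_space +
  assumes cinner_complete:
    "(\<forall>e>0. \<exists>N. \<forall>m\<ge>N. \<forall>n\<ge>N. sqrt (Re (cinner (X m - X n) (X m - X n))) < e)
      \<Longrightarrow> \<exists>L. (\<lambda>n. sqrt (Re (cinner (X n - L) (X n - L)))) \<longlonglongrightarrow> 0"

instantiation prod :: (complex_inner_space, complex_inner_space) complex_inner_space
begin
definition scaleC_prod_def: "scaleC a p = (scaleC a (fst p), scaleC a (snd p))"
definition cinner_prod_def: "cinner p q = cinner (fst p) (fst q) + cinner (snd p) (snd q)"
instance
proof
  fix a b :: complex and x y z :: "'a \<times> 'b"
  show "scaleC a (x + y) = scaleC a x + scaleC a y"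
    by (simp add: scaleC_prod_def scaleC_add_right)
  show "scaleC (a + b) x = scaleC a x + scaleC b x"
    by (simp add: scaleC_prod_def scaleC_add_left)
  show "scaleC a (scaleC b x) = scaleC (a * b) x"
    by (simp add: scaleC_prod_def scaleC_scaleC)
  show "scaleC 1 x = x"
    by (simp add: scaleC_prod_def scaleC_one)
  show "cinner (x + y) z = cinner x z + cinner y z"
    by (simp add: cinner_prod_def cinner_add_left algebra_simps)
  show "cinner (scaleC a x) y = a * cinner x y"
    by (simp add: cinner_prod_def scaleC_prod_def cinner_scaleC_left algebra_simps)
  show "cinner y x = cnj (cinner x y)"
    by (simp add: cinner_prod_def cinner_commute[of "fst x"] cinner_commute[of "snd x"])
  show "0 \<le> Re (cinner x x)"
    by (simp add: cinner_prod_def cinner_ge_zero add_nonneg_nonneg)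
  show "cinner x x = 0 \<longleftrightarrow> x = 0"
  proof
    assume h: "cinner x x = 0"
    have r: "Re (cinner (fst x) (fst x)) + Re (cinner (snd x) (snd x)) = 0"
      using arg_cong[OF h[unfolded cinner_prod_def], of Re] by simp
    have "Re (cinner (fst x) (fst x)) = 0" "Re (cinner (snd x) (snd x)) = 0"
      using r cinner_ge_zero[of "fst x"] cinner_ge_zero[of "snd x"] by linarith+
    moreover have "Im (cinner (fst x) (fst x)) = 0" "Im (cinner (snd x) (snd x)) = 0"
      using cinner_commute[of "fst x" "fst x"] cinner_commute[of "snd x" "snd x"]
      by (metis cnj.sel(2) complex.expand equation_minus_iff neg_equal_zero)+
    ultimately have "cinner (fst x) (fst x) = 0" "cinner (snd x) (snd x) = 0"
      by (simp_all add: complex_eq_iff)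
    then show "x = 0" by (simp add: cinner_eq_zero_iff prod_eq_iff)
  next
    assume "x = 0"
    have "cinner (0::'a) 0 = 0" "cinner (0::'b) 0 = 0" by (simp_all add: cinner_eq_zero_iff)
    then show "cinner x x = 0" using \<open>x = 0\<close> by (simp add: cinner_prod_def)
  qed
qed
end

definition cbounded_linear :: "('a::complex_inner_space \<Rightarrow> 'b::complex_inner_space) \<Rightarrow> bool" where
  "cbounded_linear A \<longleftrightarrow>
     (\<forall>x y. A (x + y) = A x + A y) \<and> (\<forall>a x. A (scaleC a x) = scaleC a (A x)) \<and>
     (\<exists>K. \<forall>x. cnorm (A x) \<le> K * cnorm x)"

definition adj :: "('a::complex_inner_space \<Rightarrow> 'a) \<Rightarrow> ('a \<Rightarrow> 'a)" where
  "adj A = (THE A'. \<forall>x y. cinner (A x) y = cinner x (A' y))"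

definition opnorm :: "('a::complex_inner_space \<Rightarrow> 'a) \<Rightarrow> real" where
  "opnorm A = Sup {cnorm (A x) | x. cnorm x \<le> 1}"

text \<open>Numerical radius w(A) = sup of |<A x, x>| over unit vectors (taken over the
closed unit ball, which gives the same value and avoids an empty sup on the zero space).\<close>
definition numrad :: "('a::complex_inner_space \<Rightarrow> 'a) \<Rightarrow> real" where
  "numrad A = Sup {cmod (cinner (A x) x) | x. cnorm x \<le> 1}"

definition opmatrix ::
  "('a::complex_inner_space \<Rightarrow> 'a) \<Rightarrow> ('a \<Rightarrow> 'a) \<Rightarrow> ('a \<Rightarrow> 'a) \<Rightarrow> ('a \<Rightarrow> 'a) \<Rightarrow> ('a \<times> 'a \<Rightarrow> 'a \<times> 'a)" where
  "opmatrix A B C D = (\<lambda>(x1, x2). (A x1 + B x2, C x1 + D x2))"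

end

theory Submission
  imports Defs
begin

text \<open>Let \<open>S = B + C\<^sup>*\<close>, \<open>D = B - C\<^sup>*\<close> and let \<open>T\<close> be the off-diagonal operator matrix.
Evaluating \<open>\<langle>Tx, x\<rangle>\<close> at \<open>x = (z, \<omega> y)/\<surd>2\<close> with a suitable unimodular \<open>\<omega>\<close> recovers
\<open>|\<langle>Sy, z\<rangle>|\<close> and \<open>|\<langle>Dy, z\<rangle>|\<close> up to a factor 2, so \<open>\<parallel>S\<parallel>, \<parallel>D\<parallel> \<le> 2 w(T)\<close>. Conversely
\<open>2 (B\<^sup>*B + CC\<^sup>*) = S\<^sup>*S + D\<^sup>*D\<close> and \<open>2 (BB\<^sup>* + C\<^sup>*C) = SS\<^sup>* + DD\<^sup>*\<close>, so both norms in the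
hypothesis are at most \<open>(\<parallel>S\<parallel>\<^sup>2 + \<parallel>D\<parallel>\<^sup>2)/2\<close>. The hypothesis therefore squeezes
\<open>8 w(T)\<^sup>2 \<le> \<parallel>S\<parallel>\<^sup>2 + \<parallel>D\<parallel>\<^sup>2 \<le> 8 w(T)\<^sup>2\<close>, whence \<open>\<parallel>S\<parallel> = \<parallel>D\<parallel> = 2 w(T)\<close>.

Adjoints exist by the Riesz representation theorem: by uniform convexity a maximising
sequence of a bounded functional on the unit ball is Cauchy, its limit attains the norm, and
it is orthogonal to the kernel.\<close>

section \<open>Complex inner product spaces\<close>

lemma scaleC_zero_left [simp]: "scaleC 0 (x::'a::complex_inner_space) = 0"
proof -
  have "scaleC 0 x + scaleC 0 x = scaleC 0 x" by (simp add: scaleC_add_left[symmetric])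
  then show ?thesis by simp
qed

lemma scaleC_zero_right [simp]: "scaleC a (0::'a::complex_inner_space) = 0"
proof -
  have "scaleC a 0 + scaleC a 0 = scaleC a (0::'a)" by (simp add: scaleC_add_right[symmetric])
  then show ?thesis by simp
qed

lemma scaleC_minus_right: "scaleC a (- x::'a::complex_inner_space) = - scaleC a x"
proof -
  have "scaleC a (- x) + scaleC a x = 0" by (simp add: scaleC_add_right[symmetric])
  then show ?thesis by (simp add: eq_neg_iff_add_eq_0)
qed

lemma scaleC_diff_right: "scaleC a (x - y::'a::complex_inner_space) = scaleC a x - scaleC a y"
  using scaleC_add_right[of a x "- y"] by (simp add: scaleC_minus_right)

lemma cinner_zero_left [simp]: "cinner (0::'a::complex_inner_space) y = 0"
proof -
  have "cinner (0::'a) y + cinner 0 y = cinner 0 y" by (simp add: cinner_add_left[symmetric])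
  then show ?thesis by simp
qed

lemma cinner_zero_right [simp]: "cinner (x::'a::complex_inner_space) 0 = 0"
  using cinner_commute[of x 0] by simp

lemma cinner_add_right: "cinner (x::'a::complex_inner_space) (y + z) = cinner x y + cinner x z"
  using cinner_commute[of x "y + z"] cinner_commute[of y x] cinner_commute[of z x]
  by (simp add: cinner_add_left)

lemma cinner_scaleC_right: "cinner (x::'a::complex_inner_space) (scaleC a y) = cnj a * cinner x y"
  using cinner_commute[of x "scaleC a y"] cinner_commute[of y x] by (simp add: cinner_scaleC_left)

lemma cinner_minus_left: "cinner (- x::'a::complex_inner_space) y = - cinner x y"
proof -
  have "cinner (- x) y + cinner x y = 0" by (simp add: cinner_add_left[symmetric])
  then show ?thesis by (simp add: eq_neg_iff_add_eq_0)
qed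

lemma cinner_minus_right: "cinner (x::'a::complex_inner_space) (- y) = - cinner x y"
  using cinner_commute[of x "- y"] cinner_commute[of y x] by (simp add: cinner_minus_left)

lemma cinner_diff_left: "cinner (x - y::'a::complex_inner_space) z = cinner x z - cinner y z"
  using cinner_add_left[of x "- y" z] by (simp add: cinner_minus_left)

lemma cinner_diff_right: "cinner (x::'a::complex_inner_space) (y - z) = cinner x y - cinner x z"
  using cinner_add_right[of x y "- z"] by (simp add: cinner_minus_right)

lemma cinner_ext_right:
  assumes "\<And>x. cinner x a = cinner x (b::'a::complex_inner_space)"
  shows "a = b"
proof -
  have "cinner (a - b) (a - b) = 0" using assms[of "a - b"] by (simp add: cinner_diff_right)
  then show ?thesis by (simp add: cinner_eq_zero_iff)
qed

lemma cnorm_nonneg [simp]: "0 \<le> cnorm x"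
  by (simp add: cnorm_def cinner_ge_zero)

lemma cnorm_power2: "(cnorm x)\<^sup>2 = Re (cinner x x)"
  by (simp add: cnorm_def cinner_ge_zero)

lemma cinner_self_eq_cnorm: "cinner x x = complex_of_real ((cnorm x)\<^sup>2)"
proof -
  have "Im (cinner x x) = - Im (cinner x x)" using arg_cong[OF cinner_commute[of x x], of Im] by simp
  then show ?thesis by (simp add: complex_eq_iff cnorm_power2)
qed

lemma cnorm_zero [simp]: "cnorm (0::'a::complex_inner_space) = 0"
  by (simp add: cnorm_def)

lemma cnorm_eq_zero: "cnorm (x::'a::complex_inner_space) = 0 \<longleftrightarrow> x = 0"
proof -
  have "cnorm x = 0 \<longleftrightarrow> cinner x x = 0" by (simp add: cinner_self_eq_cnorm)
  then show ?thesis by (simp add: cinner_eq_zero_iff)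
qed

lemma cnorm_pos: "x \<noteq> 0 \<Longrightarrow> 0 < cnorm (x::'a::complex_inner_space)"
  using cnorm_eq_zero[of x] cnorm_nonneg[of x] by linarith

lemma cnorm_scaleC: "cnorm (scaleC a (x::'a::complex_inner_space)) = cmod a * cnorm x"
proof -
  have "cinner (scaleC a x) (scaleC a x) = a * cnj a * cinner x x"
    by (simp add: cinner_scaleC_left cinner_scaleC_right)
  also have "a * cnj a = complex_of_real ((cmod a)\<^sup>2)" by (rule complex_norm_square[symmetric])
  finally have "(cnorm (scaleC a x))\<^sup>2 = (cmod a * cnorm x)\<^sup>2"
    by (simp add: cinner_self_eq_cnorm power_mult_distrib flip: of_real_mult of_real_power)
  then show ?thesis by (simp add: power2_eq_iff_nonneg)
qed

lemma cnorm_minus: "cnorm (- (x::'a::complex_inner_space)) = cnorm x"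
  by (simp add: cnorm_def cinner_minus_left cinner_minus_right)

lemma cnorm_minus_commute: "cnorm ((x::'a::complex_inner_space) - y) = cnorm (y - x)"
  using cnorm_minus[of "x - y"] by simp

lemma cnorm_add_power2:
  "(cnorm ((x::'a::complex_inner_space) + y))\<^sup>2 = (cnorm x)\<^sup>2 + 2 * Re (cinner x y) + (cnorm y)\<^sup>2"
proof -
  have "cinner (x + y) (x + y) = cinner x x + cinner x y + cinner y x + cinner y y"
    by (simp add: cinner_add_left cinner_add_right)
  moreover have "Re (cinner y x) = Re (cinner x y)" using cinner_commute[of y x] by simp
  ultimately show ?thesis by (simp add: cnorm_power2)
qed

lemma cinner_Cauchy_Schwarz: "cmod (cinner (x::'a::complex_inner_space) y) \<le> cnorm x * cnorm y"
proof (cases "y = 0")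
  case True
  then show ?thesis by simp
next
  case False
  define n where "n = (cnorm y)\<^sup>2"
  have n: "n > 0" using cnorm_pos[OF False] by (simp add: n_def)
  define t where "t = cinner x y / complex_of_real n"
  have "cinner (x - scaleC t y) (x - scaleC t y)
      = cinner x x - cnj t * cinner x y - t * cinner y x + t * cnj t * cinner y y"
    by (simp add: cinner_diff_left cinner_diff_right cinner_scaleC_left cinner_scaleC_right
        algebra_simps)
  also have "\<dots> = cinner x x - complex_of_real ((cmod (cinner x y))\<^sup>2 / n)"
  proof -
    have "cinner y y = complex_of_real n" by (simp add: n_def cinner_self_eq_cnorm)
    moreover have "cinner x y * cnj (cinner x y) = complex_of_real ((cmod (cinner x y))\<^sup>2)"
      by (rule complex_norm_square[symmetric])
    ultimately show ?thesis
      using n unfolding cinner_commute[of y x] t_def by (simp add: field_simps power2_eq_square)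
  qed
  finally have "(cmod (cinner x y))\<^sup>2 / n \<le> (cnorm x)\<^sup>2"
    using cinner_ge_zero[of "x - scaleC t y"] by (simp add: cnorm_power2)
  then have "(cmod (cinner x y))\<^sup>2 \<le> (cnorm x * cnorm y)\<^sup>2"
    using n by (simp add: n_def field_simps power_mult_distrib)
  then show ?thesis by (rule power2_le_imp_le) simp
qed

lemma cnorm_triangle_ineq: "cnorm ((x::'a::complex_inner_space) + y) \<le> cnorm x + cnorm y"
proof -
  have "Re (cinner x y) \<le> cnorm x * cnorm y"
    using cinner_Cauchy_Schwarz[of x y] complex_Re_le_cmod[of "cinner x y"] by linarith
  then have "(cnorm (x + y))\<^sup>2 \<le> (cnorm x + cnorm y)\<^sup>2"
    by (simp add: cnorm_add_power2 power2_sum)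
  then show ?thesis by (rule power2_le_imp_le) simp
qed

lemma cnorm_triangle_ineq4: "cnorm ((x::'a::complex_inner_space) - y) \<le> cnorm x + cnorm y"
  using cnorm_triangle_ineq[of x "- y"] by (simp add: cnorm_minus)

lemma cnorm_parallelogram:
  "(cnorm ((x::'a::complex_inner_space) + y))\<^sup>2 + (cnorm (x - y))\<^sup>2
    = 2 * (cnorm x)\<^sup>2 + 2 * (cnorm y)\<^sup>2"
  using cnorm_add_power2[of x y] cnorm_add_power2[of x "- y"]
  by (simp add: cinner_minus_right cnorm_minus)

lemma cnorm_add_self: "cnorm (x + x) = 2 * cnorm (x::'a::complex_inner_space)"
  using cnorm_scaleC[of 2 x] scaleC_add_left[of 1 1 x] by (simp add: scaleC_one)

lemma cnorm_Pair_power2: "(cnorm (x, y))\<^sup>2 = (cnorm x)\<^sup>2 + (cnorm y)\<^sup>2"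
  by (simp add: cnorm_power2 cinner_prod_def)

lemma cnorm_Pair_le: "cnorm (x, y) \<le> cnorm x + cnorm y"
  by (rule power2_le_imp_le) (simp_all add: cnorm_Pair_power2 power2_sum)

lemma cnorm_fst_le: "cnorm x \<le> cnorm (x, y)"
  by (rule power2_le_imp_le) (simp_all add: cnorm_Pair_power2)

lemma cnorm_snd_le: "cnorm y \<le> cnorm (x, y)"
  by (rule power2_le_imp_le) (simp_all add: cnorm_Pair_power2)

lemma cnj_sgn_mult_self: "cnj (sgn a) * a = complex_of_real (cmod a)"
proof -
  have "cnj a * a = complex_of_real (cmod a * cmod a)"
    by (metis complex_norm_square mult.commute of_real_mult power2_eq_square)
  then show ?thesis by (cases "a = 0") (simp_all add: sgn_eq)
qed

lemma chilbert_Cauchy_convergent: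
  fixes X :: "nat \<Rightarrow> 'a::chilbert_space"
  assumes g: "g \<longlonglongrightarrow> 0" and dist: "\<And>m n. (cnorm (X m - X n))\<^sup>2 \<le> g m + g n"
  shows "\<exists>L. (\<lambda>n. cnorm (X n - L)) \<longlonglongrightarrow> 0"
proof -
  have "\<exists>M. \<forall>m\<ge>M. \<forall>n\<ge>M. cnorm (X m - X n) < e" if e: "e > 0" for e
  proof -
    obtain M where M: "\<And>n. n \<ge> M \<Longrightarrow> g n < e\<^sup>2 / 2"
      using order_tendstoD(2)[OF g, of "e\<^sup>2 / 2"] e by (auto simp: eventually_sequentially)
    have "cnorm (X m - X n) < e" if "m \<ge> M" "n \<ge> M" for m n
    proof -
      have "(cnorm (X m - X n))\<^sup>2 < e\<^sup>2" using dist[of m n] M[OF that(1)] M[OF that(2)] by linarith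
      then show ?thesis using e by (simp add: power_less_imp_less_base)
    qed
    then show ?thesis by blast
  qed
  then show ?thesis using cinner_complete[of X] by (simp add: cnorm_def)
qed

section \<open>Riesz representation\<close>

locale bounded_cfunctional =
  fixes f :: "'a::complex_inner_space \<Rightarrow> complex"
  assumes add: "f (x + y) = f x + f y"
    and scaleC: "f (scaleC a x) = a * f x"
    and bounded: "\<exists>K. \<forall>x. cmod (f x) \<le> K * cnorm x"
begin

definition fnorm :: real where
  "fnorm = Sup {cmod (f x) | x. cnorm x \<le> 1}"

lemma zero [simp]: "f 0 = 0"
  using scaleC[of 0 0] by simp

lemma diff: "f (x - y) = f x - f y"
  using add[of "x - y" y] by (simp add: eq_diff_eq)

lemma fnorm_upper:
  assumes "cnorm x \<le> 1"
  shows "cmod (f x) \<le> fnorm"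
proof -
  obtain K where K: "\<And>x. cmod (f x) \<le> K * cnorm x" using bounded by blast
  have bdd: "bdd_above {cmod (f x) | x. cnorm x \<le> 1}"
  proof (rule bdd_aboveI)
    fix s assume "s \<in> {cmod (f x) | x. cnorm x \<le> 1}"
    then obtain x where "s = cmod (f x)" "cnorm x \<le> 1" by blast
    then show "s \<le> \<bar>K\<bar>"
      using K[of x] abs_ge_self[of K] by (smt (verit) cnorm_nonneg mult_left_le mult_right_mono)
  qed
  show ?thesis unfolding fnorm_def by (rule cSup_upper[OF _ bdd]) (use assms in blast)
qed

lemma fnorm_nonneg: "0 \<le> fnorm"
  using fnorm_upper[of 0] by simp

lemma fnorm_bound: "cmod (f x) \<le> fnorm * cnorm x"
proof (cases "x = 0")
  case True
  then show ?thesis by simp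
next
  case False
  define c where "c = cnorm x"
  have c: "c > 0" using cnorm_pos[OF False] by (simp add: c_def)
  have "cmod (f (scaleC (complex_of_real (1 / c)) x)) \<le> fnorm"
    by (rule fnorm_upper) (use c in \<open>simp add: cnorm_scaleC c_def[symmetric] norm_divide\<close>)
  then have "cmod (f x) / c \<le> fnorm"
    using c by (simp add: scaleC norm_mult norm_divide)
  then show ?thesis using c by (simp add: c_def[symmetric] field_simps)
qed

lemma fnorm_approx:
  assumes "e > 0"
  obtains x where "cnorm x \<le> 1" "fnorm - e < Re (f x)"
proof -
  have "{cmod (f x) | x. cnorm x \<le> 1} \<noteq> {}" by (auto intro: exI[of _ 0])
  moreover have "fnorm - e < Sup {cmod (f x) | x. cnorm x \<le> 1}"
    using assms by (simp add: fnorm_def)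
  ultimately obtain x where x: "cnorm x \<le> 1" "fnorm - e < cmod (f x)"
    using less_cSupE by blast
  define x' where "x' = scaleC (cnj (sgn (f x))) x"
  have "cnorm x' \<le> 1"
    using x(1) by (simp add: x'_def cnorm_scaleC norm_sgn)
  moreover have "Re (f x') = cmod (f x)" by (simp add: x'_def scaleC cnj_sgn_mult_self)
  ultimately show ?thesis using x(2) that by simp
qed

text \<open>Uniform convexity of the unit ball, via the parallelogram law.\<close>
lemma near_maximizers_close:
  assumes x: "cnorm x \<le> 1" and y: "cnorm y \<le> 1" and pos: "fnorm > 0"
  shows "(cnorm (x - y))\<^sup>2 \<le> 4 * ((fnorm - Re (f x)) + (fnorm - Re (f y))) / fnorm"
proof -
  define g where "g = (Re (f x) + Re (f y)) / fnorm"
  have "Re (f (x + y)) \<le> fnorm * cnorm (x + y)"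
    using complex_Re_le_cmod[of "f (x + y)"] fnorm_bound[of "x + y"] by linarith
  then have g_le: "g \<le> cnorm (x + y)" using pos by (simp add: g_def add field_simps)
  have "Re (f x) \<le> fnorm" "Re (f y) \<le> fnorm"
    using complex_Re_le_cmod fnorm_upper x y by (blast intro: order_trans)+
  then have g2: "g \<le> 2" using pos by (simp add: g_def field_simps)
  have par: "(cnorm (x - y))\<^sup>2 \<le> 4 - (cnorm (x + y))\<^sup>2"
    using cnorm_parallelogram[of x y] power_le_one[OF cnorm_nonneg x, where n = 2]
      power_le_one[OF cnorm_nonneg y, where n = 2] by linarith
  have "(cnorm (x - y))\<^sup>2 \<le> 4 * (2 - g)"
  proof (cases "g \<ge> 0")
    case True
    then have "g\<^sup>2 \<le> (cnorm (x + y))\<^sup>2" using g_le by (simp add: power_mono)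
    then have "(cnorm (x - y))\<^sup>2 \<le> (2 - g) * (2 + g)"
      using par by (simp add: power2_eq_square algebra_simps)
    also have "\<dots> \<le> (2 - g) * 4" using g2 True by (intro mult_left_mono) simp_all
    finally show ?thesis by simp
  next
    case False
    then show ?thesis using par zero_le_power2[of "cnorm (x + y)"] by (smt (verit))
  qed
  also have "4 * (2 - g) = 4 * ((fnorm - Re (f x)) + (fnorm - Re (f y))) / fnorm"
    using pos by (simp add: g_def field_simps)
  finally show ?thesis .
qed

lemma orthogonal_to_maximizer:
  assumes L: "cnorm L = 1" "f L = complex_of_real fnorm" and pos: "fnorm > 0"
    and x: "f x = 0"
  shows "cinner x L = 0"
proof -
  define c where "c = cinner x L"
  define s where "s = 1 / ((cnorm x)\<^sup>2 + 1)"
  have "0 < (cnorm x)\<^sup>2 + 1" by (simp add: add_nonneg_pos)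
  then have s: "0 < s" "s * (cnorm x)\<^sup>2 \<le> 1" by (simp_all add: s_def field_simps)
  \<comment> \<open>\<open>f\<close> takes the value \<open>fnorm\<close> at \<open>L - s \<langle>L, x\<rangle> x\<close>, so this vector has norm at least one\<close>
  define y where "y = L + scaleC (- complex_of_real s * cnj c) x"
  have "f y = complex_of_real fnorm" by (simp add: y_def add scaleC x L)
  then have "fnorm \<le> fnorm * cnorm y" using fnorm_bound[of y] by simp
  then have "1 \<le> (cnorm y)\<^sup>2" using pos by (simp add: one_le_power)
  moreover have "cinner L (scaleC (- complex_of_real s * cnj c) x)
      = - complex_of_real (s * (cmod c)\<^sup>2)"
    using complex_norm_square[of c, symmetric]
    by (simp add: cinner_scaleC_right c_def cinner_commute[of L x])
  ultimately have "1 \<le> 1 - 2 * (s * (cmod c)\<^sup>2) + (s * cmod c * cnorm x)\<^sup>2"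
    using cnorm_add_power2[of L "scaleC (- complex_of_real s * cnj c) x"] L(1)
    by (simp add: y_def cnorm_scaleC norm_mult abs_of_pos[OF s(1)])
  then have "s * (cmod c)\<^sup>2 * 2 \<le> s * (cmod c)\<^sup>2 * (s * (cnorm x)\<^sup>2)"
    by (simp add: power_mult_distrib algebra_simps power2_eq_square)
  also have "\<dots> \<le> s * (cmod c)\<^sup>2 * 1" using s by (intro mult_left_mono) simp_all
  finally have "s * (cmod c)\<^sup>2 \<le> 0" by simp
  then show ?thesis using s(1) by (simp add: c_def mult_le_0_iff)
qed

lemma representation_by_maximizer:
  assumes L: "cnorm L = 1" "f L = complex_of_real fnorm" and pos: "fnorm > 0"
  shows "f x = cinner x (scaleC (complex_of_real fnorm) L)"
proof -
  define v where "v = x - scaleC (f x / complex_of_real fnorm) L"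
  have "f v = 0" using pos by (simp add: v_def diff scaleC L)
  then have "cinner v L = 0" by (rule orthogonal_to_maximizer[OF L pos])
  then show ?thesis
    using pos L(1) by (simp add: v_def cinner_diff_left cinner_scaleC_left cinner_scaleC_right
        cinner_self_eq_cnorm)
qed

end

lemma bounded_cfunctional_norm_attained:
  fixes f :: "'a::chilbert_space \<Rightarrow> complex"
  assumes "bounded_cfunctional f" and pos: "bounded_cfunctional.fnorm f > 0"
  obtains L where "cnorm L = 1" "f L = complex_of_real (bounded_cfunctional.fnorm f)"
proof -
  interpret bounded_cfunctional f by fact
  have "\<exists>x. cnorm x \<le> 1 \<and> fnorm - inverse (real (Suc n)) < Re (f x)" for n
    by (rule fnorm_approx[of "inverse (real (Suc n))"]) auto
  then obtain X where X: "\<And>n. cnorm (X n) \<le> 1"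
    and X_approx: "\<And>n. fnorm - inverse (real (Suc n)) < Re (f (X n))"
    by metis
  define g where "g = (\<lambda>n. 4 * inverse (real (Suc n)) / fnorm)"
  have "(\<lambda>n. 4 * inverse (real (Suc n)) / fnorm) \<longlonglongrightarrow> 4 * 0 / fnorm"
    by (intro tendsto_divide tendsto_mult tendsto_const LIMSEQ_inverse_real_of_nat) (use pos in simp)
  then have "g \<longlonglongrightarrow> 0" by (simp add: g_def)
  moreover have "(cnorm (X m - X n))\<^sup>2 \<le> g m + g n" for m n
  proof -
    have "(cnorm (X m - X n))\<^sup>2 \<le> 4 * ((fnorm - Re (f (X m))) + (fnorm - Re (f (X n)))) / fnorm"
      by (rule near_maximizers_close[OF X X pos])
    also have "\<dots> \<le> g m + g n"
      using X_approx[of m] X_approx[of n] pos by (simp add: g_def divide_right_mono flip: add_divide_distrib)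
    finally show ?thesis .
  qed
  ultimately obtain L where lim: "(\<lambda>n. cnorm (X n - L)) \<longlonglongrightarrow> 0"
    using chilbert_Cauchy_convergent[of g X] by auto
  have "cnorm L \<le> 1 + cnorm (X n - L)" for n
    using cnorm_triangle_ineq4[of "X n" "X n - L"] X[of n] by simp
  then have L_le: "cnorm L \<le> 1"
    using lim by (intro LIMSEQ_le_const[of "\<lambda>n. 1 + cnorm (X n - L)"]) (auto intro: tendsto_eq_intros)
  have "\<bar>Re (f L) - fnorm\<bar> \<le> fnorm * cnorm (X n - L) + inverse (real (Suc n))" for n
  proof -
    have "\<bar>Re (f L) - Re (f (X n))\<bar> \<le> cmod (f (L - X n))"
      using abs_Re_le_cmod[of "f (L - X n)"] by (simp add: diff)
    also have "\<dots> \<le> fnorm * cnorm (X n - L)"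
      using fnorm_bound[of "L - X n"] by (simp add: cnorm_minus_commute)
    finally show ?thesis
      using X_approx[of n] complex_Re_le_cmod[of "f (X n)"] fnorm_upper[OF X[of n]] by linarith
  qed
  moreover have "(\<lambda>n. fnorm * cnorm (X n - L) + inverse (real (Suc n))) \<longlonglongrightarrow> fnorm * 0 + 0"
    by (intro tendsto_intros lim LIMSEQ_inverse_real_of_nat)
  ultimately have "\<bar>Re (f L) - fnorm\<bar> \<le> 0" by (intro LIMSEQ_le_const) auto
  then have Re_fL: "Re (f L) = fnorm" by simp
  have fL_le: "cmod (f L) \<le> fnorm * cnorm L" by (rule fnorm_bound)
  then have "cmod (f L) \<le> fnorm"
    using L_le fnorm_nonneg by (meson mult_left_le order_trans)
  then have "(Im (f L))\<^sup>2 \<le> 0"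
    using Re_fL cmod_power2[of "f L"] power_mono[OF _ norm_ge_zero, where n = 2] by fastforce
  then have "f L = complex_of_real fnorm" using Re_fL by (simp add: complex_eq_iff)
  moreover have "fnorm * 1 \<le> fnorm * cnorm L"
    using fL_le Re_fL complex_Re_le_cmod[of "f L"] by simp
  then have "cnorm L = 1" using L_le pos by (simp add: mult_le_cancel_left_pos)
  ultimately show ?thesis using that by blast
qed

lemma Riesz_representation:
  fixes f :: "'a::chilbert_space \<Rightarrow> complex"
  assumes "bounded_cfunctional f"
  obtains z where "\<And>x. f x = cinner x z"
proof -
  interpret bounded_cfunctional f by fact
  show ?thesis
  proof (cases "fnorm = 0")
    case True
    then show ?thesis using that[of 0] fnorm_bound by simp
  next
    case False
    then have pos: "fnorm > 0" using fnorm_nonneg by simp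
    obtain L where "cnorm L = 1" "f L = complex_of_real fnorm"
      using bounded_cfunctional_norm_attained[OF assms pos] .
    then show ?thesis using that representation_by_maximizer pos by blast
  qed
qed

section \<open>Bounded operators and adjoints\<close>

lemma cbounded_linear_add: "cbounded_linear A \<Longrightarrow> A (x + y) = A x + A y"
  by (simp add: cbounded_linear_def)

lemma cbounded_linear_scaleC: "cbounded_linear A \<Longrightarrow> A (scaleC a x) = scaleC a (A x)"
  by (simp add: cbounded_linear_def)

lemma cbounded_linear_zero: "cbounded_linear A \<Longrightarrow> A 0 = 0"
  using cbounded_linear_scaleC[of A 0 0] by simp

lemma cbounded_linear_diff: "cbounded_linear A \<Longrightarrow> A (x - y) = A x - A y"
  using cbounded_linear_add[of A "x - y" y] by (simp add: eq_diff_eq)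

lemma cbounded_linear_bound:
  assumes "cbounded_linear A"
  obtains K where "K \<ge> 0" "\<And>x. cnorm (A x) \<le> K * cnorm x"
proof -
  obtain K where K: "\<And>x. cnorm (A x) \<le> K * cnorm x"
    using assms by (auto simp: cbounded_linear_def)
  have "cnorm (A x) \<le> max K 0 * cnorm x" for x
    using K[of x] by (metis cnorm_nonneg max.cobounded1 mult_right_mono order_trans)
  then show ?thesis using that[of "max K 0"] by simp
qed

lemma cbounded_linearI:
  assumes "\<And>x y. A (x + y) = A x + A y" "\<And>a x. A (scaleC a x) = scaleC a (A x)"
    and "\<And>x. cnorm (A x) \<le> K * cnorm x"
  shows "cbounded_linear A"
  using assms unfolding cbounded_linear_def by blast

lemma cbounded_linear_compose_add:
  assumes "cbounded_linear A" "cbounded_linear B"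
  shows "cbounded_linear (\<lambda>x. A x + B x)"
proof -
  obtain K1 K2 where "\<And>x. cnorm (A x) \<le> K1 * cnorm x" "\<And>x. cnorm (B x) \<le> K2 * cnorm x"
    using assms by (meson cbounded_linear_bound)
  then have "cnorm (A x + B x) \<le> (K1 + K2) * cnorm x" for x
    using cnorm_triangle_ineq[of "A x" "B x"] by (smt (verit) distrib_right)
  then show ?thesis
    using assms by (intro cbounded_linearI[where K = "K1 + K2"])
      (simp_all add: cbounded_linear_add cbounded_linear_scaleC scaleC_add_right algebra_simps)
qed

lemma cbounded_linear_compose_diff:
  assumes "cbounded_linear A" "cbounded_linear B"
  shows "cbounded_linear (\<lambda>x. A x - B x)"
proof -
  obtain K1 K2 where "\<And>x. cnorm (A x) \<le> K1 * cnorm x" "\<And>x. cnorm (B x) \<le> K2 * cnorm x"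
    using assms by (meson cbounded_linear_bound)
  then have "cnorm (A x - B x) \<le> (K1 + K2) * cnorm x" for x
    using cnorm_triangle_ineq4[of "A x" "B x"] by (smt (verit) distrib_right)
  then show ?thesis
    using assms by (intro cbounded_linearI[where K = "K1 + K2"])
      (simp_all add: cbounded_linear_add cbounded_linear_scaleC scaleC_diff_right algebra_simps)
qed

lemma opnorm_upper:
  assumes "cbounded_linear A" "cnorm x \<le> 1"
  shows "cnorm (A x) \<le> opnorm A"
proof -
  obtain K where K: "K \<ge> 0" "\<And>x. cnorm (A x) \<le> K * cnorm x"
    using cbounded_linear_bound[OF assms(1)] by blast
  have "bdd_above {cnorm (A x) | x. cnorm x \<le> 1}"
    using K by (intro bdd_aboveI[where M = K]) (auto intro: order_trans mult_left_le)
  then show ?thesis unfolding opnorm_def by (rule cSup_upper[rotated]) (use assms(2) in blast)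
qed

lemma opnorm_least:
  assumes "\<And>x. cnorm x \<le> 1 \<Longrightarrow> cnorm (A x) \<le> M"
  shows "opnorm A \<le> M"
  unfolding opnorm_def using assms by (intro cSup_least) (auto intro: exI[of _ 0])

lemma opnorm_nonneg: "cbounded_linear A \<Longrightarrow> 0 \<le> opnorm A"
  using opnorm_upper[of A 0] cnorm_nonneg[of "A 0"] by (simp del: cnorm_nonneg)

lemma cnorm_le_opnorm:
  assumes "cbounded_linear A"
  shows "cnorm (A x) \<le> opnorm A * cnorm x"
proof (cases "x = 0")
  case True
  then show ?thesis by (simp add: cbounded_linear_zero[OF assms])
next
  case False
  define c where "c = cnorm x"
  have c: "c > 0" using cnorm_pos[OF False] by (simp add: c_def)
  have "cnorm (A (scaleC (complex_of_real (1 / c)) x)) \<le> opnorm A"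
    by (rule opnorm_upper[OF assms]) (use c in \<open>simp add: cnorm_scaleC c_def[symmetric] norm_divide\<close>)
  then have "cnorm (A x) / c \<le> opnorm A"
    using c by (simp add: cbounded_linear_scaleC[OF assms] cnorm_scaleC norm_divide)
  then show ?thesis using c by (simp add: c_def[symmetric] field_simps)
qed

lemma opnorm_le_cinner_bound:
  fixes A :: "'a::complex_inner_space \<Rightarrow> 'a"
  assumes "\<And>y z. cnorm y \<le> 1 \<Longrightarrow> cnorm z \<le> 1 \<Longrightarrow> cmod (cinner (A y) z) \<le> M"
  shows "opnorm A \<le> M"
proof (rule opnorm_least)
  fix y :: 'a assume y: "cnorm y \<le> 1"
  show "cnorm (A y) \<le> M"
  proof (cases "A y = 0")
    case True
    then show ?thesis using assms[OF y, of 0] by simp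
  next
    case False
    define c where "c = cnorm (A y)"
    have c: "c > 0" using cnorm_pos[OF False] by (simp add: c_def)
    have "cmod (cinner (A y) (scaleC (complex_of_real (1 / c)) (A y))) \<le> M"
      by (rule assms[OF y]) (use c in \<open>simp add: cnorm_scaleC c_def[symmetric] norm_divide\<close>)
    then show ?thesis
      using c by (simp add: cinner_scaleC_right cinner_self_eq_cnorm c_def[symmetric]
          norm_divide power2_eq_square)
  qed
qed

lemma adj_unique:
  assumes "\<And>x y. cinner (A x) y = cinner x (A' y)"
  shows "adj A = A'"
proof -
  have "A'' = A'" if "\<forall>x y. cinner (A x) y = cinner x (A'' y)" for A''
    using that assms by (intro ext cinner_ext_right) metis
  then show ?thesis unfolding adj_def using assms by (intro the_equality) auto
qed

lemma cinner_adj_right: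
  fixes A :: "'a::chilbert_space \<Rightarrow> 'a"
  assumes "cbounded_linear A"
  shows "cinner (A x) y = cinner x (adj A y)"
proof -
  obtain K where K: "K \<ge> 0" "\<And>x. cnorm (A x) \<le> K * cnorm x"
    using cbounded_linear_bound[OF assms] by blast
  have "bounded_cfunctional (\<lambda>x. cinner (A x) y)" for y
  proof
    show "cinner (A (x + x')) y = cinner (A x) y + cinner (A x') y" for x x'
      by (simp add: cbounded_linear_add[OF assms] cinner_add_left)
    show "cinner (A (scaleC a x)) y = a * cinner (A x) y" for a x
      by (simp add: cbounded_linear_scaleC[OF assms] cinner_scaleC_left)
    have "cmod (cinner (A x) y) \<le> K * cnorm y * cnorm x" for x
      using cinner_Cauchy_Schwarz[of "A x" y] K(2)[of x]
      by (smt (verit) cnorm_nonneg mult.commute mult.left_commute mult_right_mono)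
    then show "\<exists>K. \<forall>x. cmod (cinner (A x) y) \<le> K * cnorm x" by blast
  qed
  then have "\<forall>y. \<exists>z. \<forall>x. cinner (A x) y = cinner x z"
    by (metis Riesz_representation)
  then obtain A' where "\<And>x y. cinner (A x) y = cinner x (A' y)" by metis
  then show ?thesis by (simp add: adj_unique)
qed

lemma cinner_adj_left:
  fixes A :: "'a::chilbert_space \<Rightarrow> 'a"
  assumes "cbounded_linear A"
  shows "cinner (adj A y) x = cinner y (A x)"
  using cinner_adj_right[OF assms, of x y] cinner_commute[of "adj A y" x] cinner_commute[of y "A x"]
  by simp

lemma cnorm_adj_le:
  fixes A :: "'a::chilbert_space \<Rightarrow> 'a"
  assumes "cbounded_linear A"
  shows "cnorm (adj A y) \<le> opnorm A * cnorm y"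
proof -
  have "(cnorm (adj A y))\<^sup>2 = Re (cinner (A (adj A y)) y)"
    by (simp add: cnorm_power2 cinner_adj_right[OF assms])
  also have "\<dots> \<le> cnorm (A (adj A y)) * cnorm y"
    using complex_Re_le_cmod cinner_Cauchy_Schwarz by (rule order_trans)
  also have "\<dots> \<le> opnorm A * cnorm y * cnorm (adj A y)"
    using cnorm_le_opnorm[OF assms, of "adj A y"] by (simp add: mult_left_mono mult_ac)
  finally have "cnorm (adj A y) * cnorm (adj A y) \<le> (opnorm A * cnorm y) * cnorm (adj A y)"
    by (simp add: power2_eq_square)
  then show ?thesis
    using opnorm_nonneg[OF assms] cnorm_nonneg[of "adj A y"]
    by (cases "cnorm (adj A y) = 0") (auto intro: mult_right_le_imp_le)
qed

lemma cbounded_linear_adj: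
  fixes A :: "'a::chilbert_space \<Rightarrow> 'a"
  assumes "cbounded_linear A"
  shows "cbounded_linear (adj A)"
proof (rule cbounded_linearI)
  show "adj A (x + y) = adj A x + adj A y" for x y
    by (rule cinner_ext_right) (simp add: cinner_adj_right[OF assms, symmetric] cinner_add_right)
  show "adj A (scaleC a x) = scaleC a (adj A x)" for a x
    by (rule cinner_ext_right) (simp add: cinner_adj_right[OF assms, symmetric] cinner_scaleC_right)
  show "cnorm (adj A x) \<le> opnorm A * cnorm x" for x
    by (rule cnorm_adj_le[OF assms])
qed

section \<open>Off-diagonal operator matrices\<close>

lemma cbounded_linear_opmatrix:
  fixes A B C D :: "'a::complex_inner_space \<Rightarrow> 'a"
  assumes "cbounded_linear A" "cbounded_linear B" "cbounded_linear C" "cbounded_linear D"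
  shows "cbounded_linear (opmatrix A B C D)"
proof -
  obtain KA KB KC KD where K: "KA \<ge> 0" "\<And>x. cnorm (A x) \<le> KA * cnorm x"
    "KB \<ge> 0" "\<And>x. cnorm (B x) \<le> KB * cnorm x"
    "KC \<ge> 0" "\<And>x. cnorm (C x) \<le> KC * cnorm x"
    "KD \<ge> 0" "\<And>x. cnorm (D x) \<le> KD * cnorm x"
    using assms by (meson cbounded_linear_bound)
  have "cnorm (opmatrix A B C D (p, q)) \<le> (KA + KB + KC + KD) * cnorm (p, q)" for p q
  proof -
    have "cnorm (opmatrix A B C D (p, q)) \<le> cnorm (A p) + cnorm (B q) + (cnorm (C p) + cnorm (D q))"
      using cnorm_Pair_le[of "A p + B q" "C p + D q"] cnorm_triangle_ineq[of "A p" "B q"]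
        cnorm_triangle_ineq[of "C p" "D q"]
      by (simp add: opmatrix_def)
    also have "\<dots> \<le> KA * cnorm (p, q) + KB * cnorm (p, q) + (KC * cnorm (p, q) + KD * cnorm (p, q))"
      using K cnorm_fst_le[of p q] cnorm_snd_le[of q p]
      by (intro add_mono order_trans[OF K(2)] order_trans[OF K(4)] order_trans[OF K(6)]
          order_trans[OF K(8)] mult_left_mono) auto
    finally show ?thesis by (simp add: algebra_simps)
  qed
  then show ?thesis
    using assms
    by (intro cbounded_linearI[where K = "KA + KB + KC + KD"])
      (auto simp: opmatrix_def scaleC_prod_def cbounded_linear_add cbounded_linear_scaleC
        scaleC_add_right)
qed

lemma cbounded_linear_zero_op: "cbounded_linear (\<lambda>_. 0)"
  by (rule cbounded_linearI[where K = 0]) simp_all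

lemma numrad_upper:
  assumes "cbounded_linear T" "cnorm x \<le> 1"
  shows "cmod (cinner (T x) x) \<le> numrad T"
proof -
  obtain K where K: "K \<ge> 0" "\<And>x. cnorm (T x) \<le> K * cnorm x"
    using cbounded_linear_bound[OF assms(1)] by blast
  have "cmod (cinner (T x) x) \<le> K" if "cnorm x \<le> 1" for x
  proof -
    have "cmod (cinner (T x) x) \<le> K * cnorm x * cnorm x"
      using cinner_Cauchy_Schwarz[of "T x" x] K(2)[of x] by (meson cnorm_nonneg mult_right_mono order_trans)
    also have "\<dots> \<le> K" using that K(1) by (simp add: mult_le_one mult.assoc mult_left_le)
    finally show ?thesis .
  qed
  then have "bdd_above {cmod (cinner (T x) x) | x. cnorm x \<le> 1}" by (intro bdd_aboveI) blast
  then show ?thesis unfolding numrad_def by (rule cSup_upper[rotated]) (use assms(2) in blast)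
qed

text \<open>Test vector \<open>(z, \<omega> y) / \<surd>2\<close> in the numerical range of the off-diagonal matrix.\<close>
lemma cinner_offdiag_le_numrad:
  fixes B C :: "'a::complex_inner_space \<Rightarrow> 'a"
  assumes "cbounded_linear B" "cbounded_linear C"
    and y: "cnorm y \<le> 1" and z: "cnorm z \<le> 1" and \<omega>: "cmod \<omega> \<le> 1"
  shows "cmod (\<omega> * cinner (B y) z + cnj \<omega> * cinner (C z) y)
    \<le> 2 * numrad (opmatrix (\<lambda>_. 0) B C (\<lambda>_. 0))"
proof -
  define h where "h = complex_of_real (sqrt (1 / 2))"
  have h: "cnj h = h" "h * h = 1 / 2" "(cmod h)\<^sup>2 = 1 / 2"
    by (simp_all add: h_def flip: of_real_mult)
  define x where "x = (scaleC h z, scaleC (h * \<omega>) y)"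
  have "(cnorm x)\<^sup>2 = (cmod h)\<^sup>2 * ((cnorm z)\<^sup>2 + (cmod \<omega>)\<^sup>2 * (cnorm y)\<^sup>2)"
    by (simp add: x_def cnorm_Pair_power2 cnorm_scaleC power_mult_distrib norm_mult algebra_simps)
  also have "\<dots> \<le> 1 / 2 * (1 + 1 * 1)"
    unfolding h(3) using y z \<omega>
    by (intro mult_left_mono add_mono mult_mono power_le_one) simp_all
  finally have x: "cnorm x \<le> 1" by (simp add: power_le_one_iff)
  have "cinner (opmatrix (\<lambda>_. 0) B C (\<lambda>_. 0) x) x
      = (h * \<omega>) * cnj h * cinner (B y) z + h * cnj (h * \<omega>) * cinner (C z) y"
    using assms(1,2)
    by (simp add: x_def opmatrix_def cinner_prod_def cbounded_linear_scaleC cinner_scaleC_left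
        cinner_scaleC_right)
  also have "\<dots> = (h * h) * (\<omega> * cinner (B y) z + cnj \<omega> * cinner (C z) y)"
    by (simp add: h(1) algebra_simps)
  also have "\<dots> = (\<omega> * cinner (B y) z + cnj \<omega> * cinner (C z) y) / 2"
    by (simp add: h(2))
  finally have "\<omega> * cinner (B y) z + cnj \<omega> * cinner (C z) y
      = 2 * cinner (opmatrix (\<lambda>_. 0) B C (\<lambda>_. 0) x) x"
    by (metis mult.commute nonzero_eq_divide_eq zero_neq_numeral)
  then show ?thesis
    using numrad_upper[OF cbounded_linear_opmatrix[OF cbounded_linear_zero_op assms(1,2)
          cbounded_linear_zero_op] x]
    by (simp add: norm_mult)
qed

lemma opnorm_add_adj_le_numrad:
  fixes B C :: "'a::chilbert_space \<Rightarrow> 'a"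
  assumes B: "cbounded_linear B" and C: "cbounded_linear C"
  shows "opnorm (\<lambda>x. B x + adj C x) \<le> 2 * numrad (opmatrix (\<lambda>_. 0) B C (\<lambda>_. 0))"
proof (rule opnorm_le_cinner_bound)
  fix y z :: 'a assume y: "cnorm y \<le> 1" and z: "cnorm z \<le> 1"
  define a b where "a = cinner (B y) z" and "b = cinner (C z) y"
  define \<omega> where "\<omega> = cnj (sgn (a + cnj b))"
  have "cmod (cinner (B y + adj C y) z) = cmod (a + cnj b)"
    by (simp add: a_def b_def cinner_add_left cinner_adj_left[OF C] cinner_commute[of y])
  also have "\<dots> = Re (\<omega> * (a + cnj b))"
    unfolding \<omega>_def cnj_sgn_mult_self by simp
  also have "\<dots> = Re (\<omega> * a + cnj \<omega> * b)"
    by (simp add: algebra_simps)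
  also have "\<dots> \<le> cmod (\<omega> * a + cnj \<omega> * b)"
    by (rule complex_Re_le_cmod)
  also have "\<dots> \<le> 2 * numrad (opmatrix (\<lambda>_. 0) B C (\<lambda>_. 0))"
    unfolding a_def b_def
    by (rule cinner_offdiag_le_numrad[OF B C y z]) (simp add: \<omega>_def norm_sgn)
  finally show "cmod (cinner (B y + adj C y) z) \<le> 2 * numrad (opmatrix (\<lambda>_. 0) B C (\<lambda>_. 0))" .
qed

lemma opnorm_diff_adj_le_numrad:
  fixes B C :: "'a::chilbert_space \<Rightarrow> 'a"
  assumes B: "cbounded_linear B" and C: "cbounded_linear C"
  shows "opnorm (\<lambda>x. B x - adj C x) \<le> 2 * numrad (opmatrix (\<lambda>_. 0) B C (\<lambda>_. 0))"
proof (rule opnorm_le_cinner_bound)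
  fix y z :: 'a assume y: "cnorm y \<le> 1" and z: "cnorm z \<le> 1"
  define a b where "a = cinner (B y) z" and "b = cinner (C z) y"
  define \<omega> where "\<omega> = \<i> * cnj (sgn (a - cnj b))"
  have "cmod (cinner (B y - adj C y) z) = cmod (a - cnj b)"
    by (simp add: a_def b_def cinner_diff_left cinner_adj_left[OF C] cinner_commute[of y])
  also have "\<dots> = Im (\<omega> * (a - cnj b))"
    unfolding \<omega>_def mult.assoc cnj_sgn_mult_self by simp
  also have "\<dots> = Im (\<omega> * a + cnj \<omega> * b)"
    by (simp add: algebra_simps)
  also have "\<dots> \<le> cmod (\<omega> * a + cnj \<omega> * b)"
    using abs_Im_le_cmod by (rule order_trans[OF abs_ge_self])
  also have "\<dots> \<le> 2 * numrad (opmatrix (\<lambda>_. 0) B C (\<lambda>_. 0))"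
    unfolding a_def b_def
    by (rule cinner_offdiag_le_numrad[OF B C y z]) (simp add: \<omega>_def norm_mult norm_sgn)
  finally show "cmod (cinner (B y - adj C y) z) \<le> 2 * numrad (opmatrix (\<lambda>_. 0) B C (\<lambda>_. 0))" .
qed

lemma adj_add_adj:
  fixes B C :: "'a::chilbert_space \<Rightarrow> 'a"
  assumes "cbounded_linear B" "cbounded_linear C"
  shows "adj (\<lambda>x. B x + adj C x) = (\<lambda>y. adj B y + C y)"
  by (rule adj_unique)
    (simp add: cinner_add_left cinner_add_right cinner_adj_right[OF assms(1)] cinner_adj_left[OF assms(2)])

lemma adj_diff_adj:
  fixes B C :: "'a::chilbert_space \<Rightarrow> 'a"
  assumes "cbounded_linear B" "cbounded_linear C"
  shows "adj (\<lambda>x. B x - adj C x) = (\<lambda>y. adj B y - C y)"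
  by (rule adj_unique)
    (simp add: cinner_diff_left cinner_diff_right cinner_adj_right[OF assms(1)] cinner_adj_left[OF assms(2)])

lemma cnorm_adj_gram_add_le:
  fixes S D :: "'a::chilbert_space \<Rightarrow> 'a"
  assumes S: "cbounded_linear S" and D: "cbounded_linear D"
  shows "cnorm (adj S (S x) + adj D (D x)) \<le> ((opnorm S)\<^sup>2 + (opnorm D)\<^sup>2) * cnorm x"
proof -
  have "cnorm (adj S (S x) + adj D (D x)) \<le> opnorm S * cnorm (S x) + opnorm D * cnorm (D x)"
    using cnorm_triangle_ineq cnorm_adj_le[OF S] cnorm_adj_le[OF D] by (meson add_mono order_trans)
  also have "\<dots> \<le> opnorm S * (opnorm S * cnorm x) + opnorm D * (opnorm D * cnorm x)"
    by (intro add_mono mult_left_mono cnorm_le_opnorm opnorm_nonneg S D)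
  finally show ?thesis by (simp add: power2_eq_square algebra_simps)
qed

lemma cnorm_gram_adj_add_le:
  fixes S D :: "'a::chilbert_space \<Rightarrow> 'a"
  assumes S: "cbounded_linear S" and D: "cbounded_linear D"
  shows "cnorm (S (adj S x) + D (adj D x)) \<le> ((opnorm S)\<^sup>2 + (opnorm D)\<^sup>2) * cnorm x"
proof -
  have "cnorm (S (adj S x) + D (adj D x)) \<le> opnorm S * cnorm (adj S x) + opnorm D * cnorm (adj D x)"
    using cnorm_triangle_ineq cnorm_le_opnorm[OF S] cnorm_le_opnorm[OF D] by (meson add_mono order_trans)
  also have "\<dots> \<le> opnorm S * (opnorm S * cnorm x) + opnorm D * (opnorm D * cnorm x)"
    by (intro add_mono mult_left_mono cnorm_adj_le opnorm_nonneg S D)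
  finally show ?thesis by (simp add: power2_eq_square algebra_simps)
qed

text \<open>\<open>2 (B\<^sup>*B + CC\<^sup>*) = S\<^sup>*S + D\<^sup>*D\<close> and \<open>2 (BB\<^sup>* + C\<^sup>*C) = SS\<^sup>* + DD\<^sup>*\<close> for \<open>S = B + C\<^sup>*\<close>, \<open>D = B - C\<^sup>*\<close>.\<close>
lemma opnorm_offdiag_gram_le:
  fixes B C :: "'a::chilbert_space \<Rightarrow> 'a"
  assumes B: "cbounded_linear B" and C: "cbounded_linear C"
  defines "s \<equiv> opnorm (\<lambda>x. B x + adj C x)" and "d \<equiv> opnorm (\<lambda>x. B x - adj C x)"
  shows "opnorm (\<lambda>x. adj B (B x) + C (adj C x)) \<le> (s\<^sup>2 + d\<^sup>2) / 2"
    and "opnorm (\<lambda>x. B (adj B x) + adj C (C x)) \<le> (s\<^sup>2 + d\<^sup>2) / 2"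
proof -
  have B': "cbounded_linear (adj B)" and C': "cbounded_linear (adj C)"
    using B C by (simp_all add: cbounded_linear_adj)
  define S where "S = (\<lambda>x. B x + adj C x)"
  define D where "D = (\<lambda>x. B x - adj C x)"
  have S: "cbounded_linear S" and D: "cbounded_linear D"
    unfolding S_def D_def using B C'
    by (simp_all add: cbounded_linear_compose_add cbounded_linear_compose_diff)
  have adj_S: "adj S = (\<lambda>y. adj B y + C y)" and adj_D: "adj D = (\<lambda>y. adj B y - C y)"
    unfolding S_def D_def using adj_add_adj[OF B C] adj_diff_adj[OF B C] by simp_all
  note lin = cbounded_linear_add[OF B] cbounded_linear_diff[OF B] cbounded_linear_add[OF C]
    cbounded_linear_diff[OF C] cbounded_linear_add[OF B'] cbounded_linear_diff[OF B']
    cbounded_linear_add[OF C'] cbounded_linear_diff[OF C']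
  have half: "opnorm F \<le> (s\<^sup>2 + d\<^sup>2) / 2"
    if "\<And>x. cnorm (F x + F x) \<le> ((opnorm S)\<^sup>2 + (opnorm D)\<^sup>2) * cnorm x" for F :: "'a \<Rightarrow> 'a"
  proof (rule opnorm_least)
    fix x :: 'a assume x: "cnorm x \<le> 1"
    have "2 * cnorm (F x) \<le> (s\<^sup>2 + d\<^sup>2) * cnorm x"
      using that[of x] by (simp add: cnorm_add_self s_def d_def S_def D_def)
    also have "\<dots> \<le> s\<^sup>2 + d\<^sup>2" using x by (simp add: mult_left_le)
    finally show "cnorm (F x) \<le> (s\<^sup>2 + d\<^sup>2) / 2" by simp
  qed
  show "opnorm (\<lambda>x. adj B (B x) + C (adj C x)) \<le> (s\<^sup>2 + d\<^sup>2) / 2"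
  proof (rule half)
    fix x
    have "adj S (S x) + adj D (D x) = (adj B (B x) + C (adj C x)) + (adj B (B x) + C (adj C x))"
      unfolding adj_S adj_D by (simp add: S_def D_def lin)
    then show "cnorm ((adj B (B x) + C (adj C x)) + (adj B (B x) + C (adj C x)))
        \<le> ((opnorm S)\<^sup>2 + (opnorm D)\<^sup>2) * cnorm x"
      using cnorm_adj_gram_add_le[OF S D, of x] by simp
  qed
  show "opnorm (\<lambda>x. B (adj B x) + adj C (C x)) \<le> (s\<^sup>2 + d\<^sup>2) / 2"
  proof (rule half)
    fix x
    have "S (adj S x) + D (adj D x) = (B (adj B x) + adj C (C x)) + (B (adj B x) + adj C (C x))"
      unfolding adj_S adj_D by (simp add: S_def D_def lin)
    then show "cnorm ((B (adj B x) + adj C (C x)) + (B (adj B x) + adj C (C x)))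
        \<le> ((opnorm S)\<^sup>2 + (opnorm D)\<^sup>2) * cnorm x"
      using cnorm_gram_adj_add_le[OF S D, of x] by simp
  qed
qed

theorem mainTheorem5:
  fixes B C :: "'h::chilbert_space \<Rightarrow> 'h"
  assumes "cbounded_linear B" and "cbounded_linear C"
    and "(numrad (opmatrix (\<lambda>_. 0) B C (\<lambda>_. 0)))\<^sup>2 =
         1/4 * max (opnorm (\<lambda>x. adj B (B x) + C (adj C x)))
                   (opnorm (\<lambda>x. B (adj B x) + adj C (C x)))"
  shows "opnorm (\<lambda>x. B x + adj C x) = opnorm (\<lambda>x. B x - adj C x)"
proof -
  define w where "w = numrad (opmatrix (\<lambda>_. 0) B C (\<lambda>_. 0))"
  define s where "s = opnorm (\<lambda>x. B x + adj C x)"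
  define d where "d = opnorm (\<lambda>x. B x - adj C x)"
  have s: "0 \<le> s" "s \<le> 2 * w"
    using assms(1,2) unfolding s_def w_def
    by (simp_all add: opnorm_nonneg cbounded_linear_compose_add cbounded_linear_adj
        opnorm_add_adj_le_numrad)
  have d: "0 \<le> d" "d \<le> 2 * w"
    using assms(1,2) unfolding d_def w_def
    by (simp_all add: opnorm_nonneg cbounded_linear_compose_diff cbounded_linear_adj
        opnorm_diff_adj_le_numrad)
  have "8 * w\<^sup>2 \<le> s\<^sup>2 + d\<^sup>2"
    using assms(3) opnorm_offdiag_gram_le[OF assms(1,2)] unfolding w_def s_def d_def by simp
  moreover have "s\<^sup>2 \<le> 4 * w\<^sup>2" "d\<^sup>2 \<le> 4 * w\<^sup>2"
    using power_mono[OF s(2) s(1), of 2] power_mono[OF d(2) d(1), of 2] by (simp_all add: power_mult_distrib)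
  ultimately have "s\<^sup>2 = d\<^sup>2" by linarith
  then show ?thesis using s(1) d(1) by (simp add: s_def d_def power2_eq_iff_nonneg)
qed

end
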